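(* Let $p\in(0,1)$ and let $N_j$ be the counting processes of Simon's model with parameter $p$. For every $\gamma\in(1,1/p)$ there exist constants $c=c(\gamma,p)>0$ and $\eta=\eta(\gamma,p)\in(0,1)$ such that $$\mathbb E\big[N_j(n)^\gamma\big]\le c\,(n/j)^\eta\qquad\text{for all integers }1\le j\le n.$$
   Context: Simon's model with parameter $p$: let $\varepsilon_1=0$ and let $(\varepsilon_i)_{i\ge2}$ be i.i.d. Bernoulli($p$) variables. Define indices $\pi(i)$ recursively: $\pi(1)=1$; for $i\ge2$, $\pi(i)=i$ if $\varepsilon_i=0$, and if $\varepsilon_i=1$, $\pi(i)=\pi(U_i)$ where $U_i$ is uniform on $\{1,\dots,i-1\}$, independent of everything else. The counting processes are $N_j(k)=\#\{1\le\ell\le k:\pi(\ell)=j\}$ for integers $j,k\ge1$. *)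

theory Defs
  imports "HOL-Probability.Probability"
begin

text \<open>Law of the list [pi(1), ..., pi(k)] in Simon's model with parameter p.
  Step from i-1 = Suc k to i = Suc (Suc k): with probability p (epsilon_i = 1)
  choose U_i uniformly in {1..i-1} (list index U_i - 1 in {0..<Suc k}) and set
  pi(i) = pi(U_i); otherwise pi(i) = i.\<close>
fun simon :: "real \<Rightarrow> nat \<Rightarrow> nat list pmf" where
  "simon p 0 = return_pmf []"
| "simon p (Suc 0) = return_pmf [1]"
| "simon p (Suc (Suc k)) =
     do { xs \<leftarrow> simon p (Suc k);
          e \<leftarrow> bernoulli_pmf p;
          if e then map_pmf (\<lambda>u. xs @ [xs ! u]) (pmf_of_set {..<Suc k})
          else return_pmf (xs @ [Suc (Suc k)]) }"

definition simon_N :: "nat list \<Rightarrow> nat \<Rightarrow> nat" where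
  "simon_N xs j = count_list xs j"

end

theory Submission
  imports Defs
begin

text \<open>Track the shifted moment \<open>G(n) = E[(N\<^sub>j(n) + a)\<^sup>\<gamma>]\<close>. Given the first \<open>n\<close> indices,
  \<open>N\<^sub>j\<close> grows by one with probability \<open>p N\<^sub>j(n) / n\<close>, so by the mean value theorem
  \<open>G(n+1) \<le> G(n) + (p \<gamma> / n) E[N\<^sub>j(n) (N\<^sub>j(n) + a + 1)\<^sup>\<gamma>\<^sup>-\<^sup>1]\<close>. Since
  \<open>N (N + a + 1)\<^sup>\<gamma>\<^sup>-\<^sup>1 \<le> (1 + 1/a)\<^sup>\<gamma>\<^sup>-\<^sup>1 (N + a)\<^sup>\<gamma>\<close>, choosing \<open>a\<close> large makes the factor
  \<open>p \<gamma> (1 + 1/a)\<^sup>\<gamma>\<^sup>-\<^sup>1\<close> smaller than any \<open>\<eta> \<in> (p \<gamma>, 1)\<close>, which is possible as \<open>\<gamma> < 1/p\<close>.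
  Hence \<open>G(n+1) \<le> (1 + \<eta>/n) G(n)\<close> for \<open>n \<ge> j\<close>, and this recurrence yields
  \<open>G(n) = O((n/j)\<^sup>\<eta>)\<close> since \<open>N\<^sub>j(j) \<le> 1\<close>.\<close>

lemma set_pmf_of_set_lessThan: "0 < (n::nat) \<Longrightarrow> set_pmf (pmf_of_set {..<n}) = {..<n}"
  by (rule set_pmf_of_set) auto

lemma set_pmf_simonD:
  "xs \<in> set_pmf (simon p n) \<Longrightarrow> length xs = n \<and> set xs \<subseteq> {1..n} \<and> count_list xs n \<le> 1"
proof (induction p n arbitrary: xs rule: simon.induct)
  case (3 p k)
  from "3.prems" obtain ys e where ys: "ys \<in> set_pmf (simon p (Suc k))"
    and xs: "xs \<in> set_pmf (if e then map_pmf (\<lambda>u. ys @ [ys ! u]) (pmf_of_set {..<Suc k})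
          else return_pmf (ys @ [Suc (Suc k)]))"
    by auto
  from "3.IH"[OF ys] have len: "length ys = Suc k" and range: "set ys \<subseteq> {1..Suc k}" by auto
  then have fresh: "Suc (Suc k) \<notin> set ys" by auto
  show ?case
  proof (cases e)
    case True
    with xs obtain u where u: "u < Suc k" and "xs = ys @ [ys ! u]"
      by (auto simp: set_pmf_of_set_lessThan)
    moreover have "ys ! u \<in> {1..Suc k}"
      using range len u by (metis nth_mem subsetD)
    ultimately show ?thesis using len range fresh by auto
  qed (use xs len range fresh in auto)
qed simp_all

lemma finite_set_pmf_simon: "finite (set_pmf (simon p n))"
proof (rule finite_subset)
  show "set_pmf (simon p n) \<subseteq> {xs. set xs \<subseteq> {1..n} \<and> length xs = n}"
    using set_pmf_simonD by blast
qed (rule finite_lists_length_eq, simp)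

lemma expectation_bind_pmf_finite:
  fixes h :: "'b \<Rightarrow> real"
  assumes "finite (set_pmf M)" "\<And>x. x \<in> set_pmf M \<Longrightarrow> finite (set_pmf (N x))"
  shows "measure_pmf.expectation (M \<bind> N) h =
     measure_pmf.expectation M (\<lambda>x. measure_pmf.expectation (N x) h)"
proof -
  have "measure_pmf.expectation (M \<bind> N) h =
     (\<Sum>x\<in>set_pmf M. pmf M x *\<^sub>R measure_pmf.expectation (N x) h)"
    by (rule pmf_expectation_bind) (use assms in auto)
  then show ?thesis
    by (subst integral_measure_pmf_real[of "set_pmf M"]) (use assms in \<open>auto simp: mult.commute\<close>)
qed

lemma expectation_mono_finite_pmf:
  fixes h1 h2 :: "'a \<Rightarrow> real"
  assumes "finite (set_pmf M)" "\<And>x. x \<in> set_pmf M \<Longrightarrow> h1 x \<le> h2 x"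
  shows "measure_pmf.expectation M h1 \<le> measure_pmf.expectation M h2"
  by (rule integral_mono_AE)
    (use assms in \<open>auto intro: integrable_measure_pmf_finite simp: AE_measure_pmf_iff\<close>)

definition simon_step :: "real \<Rightarrow> nat list \<Rightarrow> nat list pmf" where
  "simon_step p xs =
     do { e \<leftarrow> bernoulli_pmf p;
          if e then map_pmf (\<lambda>u. xs @ [xs ! u]) (pmf_of_set {..<length xs})
          else return_pmf (xs @ [Suc (length xs)]) }"

lemma simon_Suc_Suc: "simon p (Suc (Suc k)) = simon p (Suc k) \<bind> simon_step p"
  unfolding simon.simps(3)
proof (rule bind_pmf_cong[OF refl])
  fix xs assume "xs \<in> set_pmf (simon p (Suc k))"
  then have "length xs = Suc k" by (simp add: set_pmf_simonD)
  then show "bernoulli_pmf p \<bind> (\<lambda>e. if e then map_pmf (\<lambda>u. xs @ [xs ! u]) (pmf_of_set {..<Suc k})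
      else return_pmf (xs @ [Suc (Suc k)])) = simon_step p xs"
    unfolding simon_step_def by (simp only:)
qed

lemma finite_set_pmf_simon_step: "xs \<noteq> [] \<Longrightarrow> finite (set_pmf (simon_step p xs))"
  by (auto simp: simon_step_def set_pmf_of_set_lessThan)

text \<open>The hypothesis \<open>j \<le> length xs\<close> ensures that a fresh index never equals \<open>j\<close>.\<close>
lemma expectation_simon_step_count:
  fixes h :: "nat \<Rightarrow> real"
  assumes "xs \<noteq> []" "j \<le> length xs" "0 \<le> p" "p \<le> 1"
  defines "c \<equiv> count_list xs j"
  shows "measure_pmf.expectation (simon_step p xs) (\<lambda>ys. h (count_list ys j)) =
    h c + p * real c / real (length xs) * (h (Suc c) - h c)"
proof -
  let ?n = "length xs"
  have card: "card {u \<in> {..<?n}. xs ! u = j} = c"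
  proof -
    have "c = card {i. i < ?n \<and> j = xs ! i}"
      unfolding c_def count_list_eq_length_filter length_filter_conv_card ..
    also have "{i. i < ?n \<and> j = xs ! i} = {u \<in> {..<?n}. xs ! u = j}"
      by auto
    finally show ?thesis by simp
  qed
  have "(\<Sum>u<?n. h (count_list (xs @ [xs ! u]) j))
      = (\<Sum>u<?n. h c + (if xs ! u = j then h (Suc c) - h c else 0))"
    by (rule sum.cong) (auto simp: c_def)
  also have "\<dots> = real ?n * h c + (\<Sum>u\<in>{u \<in> {..<?n}. xs ! u = j}. h (Suc c) - h c)"
    by (simp add: sum.distrib sum.inter_filter[symmetric])
  also have "\<dots> = real ?n * h c + real c * (h (Suc c) - h c)"
    using card by simp
  finally have copy: "(\<Sum>u<?n. h (count_list (xs @ [xs ! u]) j)) =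
      real ?n * h c + real c * (h (Suc c) - h c)" .
  have fresh: "count_list (xs @ [Suc ?n]) j = c"
    using assms(2) by (simp add: c_def)
  let ?E = "\<lambda>e. measure_pmf.expectation (if e then map_pmf (\<lambda>u. xs @ [xs ! u]) (pmf_of_set {..<?n})
      else return_pmf (xs @ [Suc ?n])) (\<lambda>ys. h (count_list ys j))"
  have "measure_pmf.expectation (simon_step p xs) (\<lambda>ys. h (count_list ys j)) =
      measure_pmf.expectation (bernoulli_pmf p) ?E"
    unfolding simon_step_def
    by (rule expectation_bind_pmf_finite) (use assms(1) in \<open>auto simp: set_pmf_of_set_lessThan\<close>)
  also have "\<dots> = p * ?E True + (1 - p) * ?E False"
    using assms(3,4) by (simp add: mult.commute)
  also have "?E True = (\<Sum>u<?n. h (count_list (xs @ [xs ! u]) j)) / real ?n"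
    using assms(1) by (simp only: if_True integral_map_pmf, subst integral_pmf_of_set) auto
  also note copy
  also have "?E False = h c"
    using fresh by simp
  finally show ?thesis
    using assms(1) by (simp add: field_simps)
qed

lemma powr_add_one_diff_le:
  fixes z g :: real
  assumes "0 < z" "1 \<le> g"
  shows "(z + 1) powr g - z powr g \<le> g * (z + 1) powr (g - 1)"
proof -
  have "\<exists>w. z < w \<and> w < z + 1 \<and> (z + 1) powr g - z powr g = (z + 1 - z) * (g * w powr (g - 1))"
    by (rule MVT2) (use assms in \<open>auto intro!: has_real_derivative_powr\<close>)
  then obtain w where w: "z < w" "w < z + 1"
    and mvt: "(z + 1) powr g - z powr g = g * w powr (g - 1)"
    by auto
  have "w powr (g - 1) \<le> (z + 1) powr (g - 1)"
    by (rule powr_mono2) (use assms w in auto)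
  then show ?thesis
    using mvt assms by (simp add: mult_left_mono)
qed

lemma mult_powr_add_one_diff_le:
  fixes a z g :: real
  assumes "0 < a" "a \<le> z" "1 \<le> g"
  shows "z * ((z + 1) powr g - z powr g) \<le> g * (1 + 1 / a) powr (g - 1) * z powr g"
proof -
  have z: "0 < z" using assms by simp
  have "z * ((z + 1) powr g - z powr g) \<le> z * (g * (z + 1) powr (g - 1))"
    by (rule mult_left_mono[OF powr_add_one_diff_le[OF z assms(3)]]) (use z in simp)
  also have "(z + 1) powr (g - 1) = z powr (g - 1) * (1 + 1 / z) powr (g - 1)"
  proof -
    have "z + 1 = z * (1 + 1 / z)"
      using z by (simp add: field_simps)
    then show ?thesis
      using z by (simp add: powr_mult)
  qed
  also have "z * (g * (z powr (g - 1) * (1 + 1 / z) powr (g - 1))) =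
      g * (1 + 1 / z) powr (g - 1) * (z * z powr (g - 1))"
    by simp
  also have "z * z powr (g - 1) = z powr g"
    using z by (simp add: powr_mult_base)
  also have "g * (1 + 1 / z) powr (g - 1) * z powr g \<le> g * (1 + 1 / a) powr (g - 1) * z powr g"
    using assms z by (intro mult_right_mono mult_left_mono powr_mono2 add_left_mono frac_le) auto
  finally show ?thesis .
qed

lemma one_plus_div_mult_powr_le:
  fixes x \<eta> :: real
  assumes "0 < x" "0 \<le> \<eta>"
  shows "(1 + \<eta> / (x + 1)) * x powr \<eta> \<le> (x + 1) powr \<eta>"
proof -
  have "ln (x / (x + 1)) \<le> x / (x + 1) - 1"
    by (rule ln_le_minus_one) (use assms in auto)
  also have "\<dots> = - 1 / (x + 1)"
    using assms by (simp add: field_simps)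
  finally have "1 / (x + 1) \<le> ln (x + 1) - ln x"
    using assms by (simp add: ln_div)
  then have "\<eta> / (x + 1) \<le> \<eta> * (ln (x + 1) - ln x)"
    using mult_left_mono assms(2) by fastforce
  then have "1 + \<eta> / (x + 1) \<le> exp (\<eta> * (ln (x + 1) - ln x))"
    using exp_ge_add_one_self[of "\<eta> / (x + 1)"] by (meson exp_le_cancel_iff order_trans)
  then have "(1 + \<eta> / (x + 1)) * x powr \<eta> \<le> exp (\<eta> * (ln (x + 1) - ln x)) * x powr \<eta>"
    by (rule mult_right_mono) simp
  also have "\<dots> = (x + 1) powr \<eta>"
    using assms by (simp add: powr_def exp_add[symmetric] algebra_simps)
  finally show ?thesis .
qed

text \<open>For \<open>\<eta> \<le> 1\<close> Bernoulli's inequality gives \<open>(1 + \<eta>/n) n\<^sup>\<eta> \<ge> (n+1)\<^sup>\<eta>\<close>, so the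
  factors cannot be absorbed directly; with the index shift of \<open>one_plus_div_mult_powr_le\<close>
  they can, and the factor 2 pays for the first step.\<close>
lemma powr_bound_of_recurrence:
  fixes G :: "nat \<Rightarrow> real" and \<eta> :: real
  assumes j: "1 \<le> j" and \<eta>: "0 \<le> \<eta>" "\<eta> \<le> 1" and "0 \<le> G j"
    and rec: "\<And>n. j \<le> n \<Longrightarrow> G (Suc n) \<le> (1 + \<eta> / real n) * G n"
    and n: "j \<le> n"
  shows "G n \<le> 2 * G j * (real n / real j) powr \<eta>"
proof -
  have shifted: "G (Suc m) \<le> 2 * G j * (real m / real j) powr \<eta>" if "j \<le> m" for m
    using that
  proof (induction m rule: dec_induct)
    case base
    have "1 + \<eta> / real j \<le> 2"
      using \<eta> j by (simp add: divide_le_eq)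
    then have "(1 + \<eta> / real j) * G j \<le> 2 * G j"
      using \<open>0 \<le> G j\<close> by (rule mult_right_mono)
    then show ?case
      using rec[of j] j by simp
  next
    case (step m)
    have m: "0 < real m" using step.hyps j by simp
    have "G (Suc (Suc m)) \<le> (1 + \<eta> / real (Suc m)) * G (Suc m)"
      by (rule rec) (use step.hyps in simp)
    also have "\<dots> \<le> (1 + \<eta> / real (Suc m)) * (2 * G j * (real m / real j) powr \<eta>)"
      by (rule mult_left_mono[OF step.IH]) (use \<eta> in simp)
    also have "\<dots> = 2 * G j / real j powr \<eta> * ((1 + \<eta> / (real m + 1)) * real m powr \<eta>)"
      using m j by (simp add: powr_divide)
    also have "\<dots> \<le> 2 * G j / real j powr \<eta> * (real m + 1) powr \<eta>"
      by (rule mult_left_mono[OF one_plus_div_mult_powr_le[OF m \<eta>(1)]]) (use \<open>0 \<le> G j\<close> in simp)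
    also have "\<dots> = 2 * G j * (real (Suc m) / real j) powr \<eta>"
      using j by (simp add: powr_divide add.commute)
    finally show ?case .
  qed
  show ?thesis
  proof (cases "n = j")
    case True
    then show ?thesis using \<open>0 \<le> G j\<close> j by simp
  next
    case False
    with n obtain m where m: "n = Suc m" "j \<le> m" by (cases n) auto
    have "G n \<le> 2 * G j * (real m / real j) powr \<eta>"
      using shifted m by simp
    also have "\<dots> \<le> 2 * G j * (real n / real j) powr \<eta>"
    proof (rule mult_left_mono)
      show "(real m / real j) powr \<eta> \<le> (real n / real j) powr \<eta>"
        using m \<eta> by (intro powr_mono2 divide_right_mono) auto
    qed (use \<open>0 \<le> G j\<close> in simp)
    finally show ?thesis .
  qed
qed

lemma expectation_simon_step_shifted_powr_le:
  fixes p a g \<eta> :: real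
  assumes "xs \<noteq> []" "j \<le> length xs" "0 \<le> p" "p \<le> 1" "0 < a" "1 \<le> g"
    and \<eta>: "p * g * (1 + 1 / a) powr (g - 1) \<le> \<eta>"
  shows "measure_pmf.expectation (simon_step p xs) (\<lambda>ys. (real (count_list ys j) + a) powr g)
    \<le> (1 + \<eta> / real (length xs)) * (real (count_list xs j) + a) powr g"
proof -
  define c where "c = count_list xs j"
  define f where "f = (\<lambda>k::nat. (real k + a) powr g)"
  have mono: "f c \<le> f (Suc c)"
    using assms by (auto simp: f_def intro: powr_mono2)
  have "p * real c * (f (Suc c) - f c) \<le> p * (real c + a) * (f (Suc c) - f c)"
    using assms mono by (intro mult_right_mono mult_left_mono) auto
  also have "\<dots> \<le> p * (g * (1 + 1 / a) powr (g - 1) * f c)"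
    using mult_powr_add_one_diff_le[of a "real c + a" g] assms
    by (simp add: f_def mult.assoc mult_left_mono add_ac)
  also have "\<dots> \<le> \<eta> * f c"
    using \<eta> by (simp add: mult.assoc[symmetric] mult_right_mono f_def)
  finally have growth: "p * real c * (f (Suc c) - f c) \<le> \<eta> * f c" .
  have "measure_pmf.expectation (simon_step p xs) (\<lambda>ys. f (count_list ys j)) =
      f c + p * real c * (f (Suc c) - f c) / real (length xs)"
    using expectation_simon_step_count[of xs j p f] assms by (simp add: c_def)
  also have "\<dots> \<le> f c + \<eta> * f c / real (length xs)"
    using growth by (simp add: divide_right_mono)
  also have "\<dots> = (1 + \<eta> / real (length xs)) * f c"
    by (simp add: field_simps)
  finally show ?thesis
    by (simp add: f_def c_def)
qed

lemma expectation_simon_Suc_shifted_powr_le: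
  fixes p a g \<eta> :: real
  assumes "1 \<le> j" "j \<le> n" "0 \<le> p" "p \<le> 1" "0 < a" "1 \<le> g"
    and \<eta>: "p * g * (1 + 1 / a) powr (g - 1) \<le> \<eta>"
  defines "F \<equiv> \<lambda>xs. (real (count_list xs j) + a) powr g"
  shows "measure_pmf.expectation (simon p (Suc n)) F
    \<le> (1 + \<eta> / real n) * measure_pmf.expectation (simon p n) F"
proof -
  obtain k where k: "n = Suc k"
    using assms by (cases n) auto
  have "measure_pmf.expectation (simon p (Suc n)) F =
      measure_pmf.expectation (simon p n) (\<lambda>xs. measure_pmf.expectation (simon_step p xs) F)"
    unfolding k simon_Suc_Suc
  proof (rule expectation_bind_pmf_finite[OF finite_set_pmf_simon])
    fix xs assume "xs \<in> set_pmf (simon p (Suc k))"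
    then show "finite (set_pmf (simon_step p xs))"
      by (intro finite_set_pmf_simon_step) (auto dest: set_pmf_simonD)
  qed
  also have "\<dots> \<le> measure_pmf.expectation (simon p n) (\<lambda>xs. (1 + \<eta> / real n) * F xs)"
  proof (rule expectation_mono_finite_pmf[OF finite_set_pmf_simon])
    fix xs assume "xs \<in> set_pmf (simon p n)"
    then have len: "length xs = n"
      by (simp add: set_pmf_simonD)
    then have "xs \<noteq> []" "j \<le> length xs"
      using assms k by auto
    from expectation_simon_step_shifted_powr_le[OF this assms(3-6) \<eta>]
    show "measure_pmf.expectation (simon_step p xs) F \<le> (1 + \<eta> / real n) * F xs"
      unfolding F_def len .
  qed
  also have "\<dots> = (1 + \<eta> / real n) * measure_pmf.expectation (simon p n) F"
    by simp
  finally show ?thesis .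
qed

text \<open>At time \<open>j\<close> the index \<open>j\<close> has just appeared, so \<open>N\<^sub>j(j) \<le> 1\<close>.\<close>
lemma expectation_simon_shifted_powr_le:
  fixes p a g \<eta> :: real
  assumes j: "1 \<le> j" "j \<le> n" and "0 \<le> p" "p \<le> 1" "0 < a" "1 \<le> g"
    and \<eta>: "p * g * (1 + 1 / a) powr (g - 1) \<le> \<eta>" "\<eta> \<le> 1"
  shows "measure_pmf.expectation (simon p n) (\<lambda>xs. (real (count_list xs j) + a) powr g)
    \<le> 2 * (1 + a) powr g * (real n / real j) powr \<eta>"
proof -
  define G where "G m = measure_pmf.expectation (simon p m) (\<lambda>xs. (real (count_list xs j) + a) powr g)"
    for m
  have "0 \<le> p * g * (1 + 1 / a) powr (g - 1)"
    using assms by simp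
  with \<eta>(1) have "0 \<le> \<eta>"
    by linarith
  have "G j \<le> measure_pmf.expectation (simon p j) (\<lambda>_. (1 + a) powr g)"
    unfolding G_def
  proof (rule expectation_mono_finite_pmf[OF finite_set_pmf_simon])
    fix xs assume "xs \<in> set_pmf (simon p j)"
    then have "count_list xs j \<le> 1"
      by (blast dest: set_pmf_simonD)
    then show "(real (count_list xs j) + a) powr g \<le> (1 + a) powr g"
      using assms by (intro powr_mono2) auto
  qed
  then have start: "G j \<le> (1 + a) powr g"
    by simp
  have "0 \<le> G j"
    unfolding G_def by (rule integral_nonneg_AE) simp
  have rec: "G (Suc m) \<le> (1 + \<eta> / real m) * G m" if "j \<le> m" for m
    unfolding G_def using expectation_simon_Suc_shifted_powr_le[OF j(1) that assms(3-6) \<eta>(1)] .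
  have "G n \<le> 2 * G j * (real n / real j) powr \<eta>"
    by (rule powr_bound_of_recurrence[OF j(1) \<open>0 \<le> \<eta>\<close> \<eta>(2) \<open>0 \<le> G j\<close> rec j(2)])
  also have "\<dots> \<le> 2 * (1 + a) powr g * (real n / real j) powr \<eta>"
    using start by (intro mult_right_mono) auto
  finally show ?thesis
    by (simp add: G_def)
qed

lemma exists_shift_powr_le:
  fixes q \<eta> g :: real
  assumes "0 < q" "q < \<eta>" "1 < g"
  shows "\<exists>a > 0. q * (1 + 1 / a) powr (g - 1) \<le> \<eta>"
proof -
  define s where "s = (\<eta> / q) powr (1 / (g - 1))"
  have "1 < s"
    using assms by (simp add: s_def)
  show ?thesis
  proof (intro exI conjI)
    show "0 < 1 / (s - 1)"
      using \<open>1 < s\<close> by simp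
    have "(1 + 1 / (1 / (s - 1))) powr (g - 1) = \<eta> / q"
      using assms by (simp add: s_def powr_powr)
    then show "q * (1 + 1 / (1 / (s - 1))) powr (g - 1) \<le> \<eta>"
      using assms by simp
  qed
qed

theorem lemma5:
  fixes p \<gamma> :: real
  assumes "0 < p" "p < 1" "1 < \<gamma>" "\<gamma> < 1 / p"
  shows "\<exists>c \<eta>. c > 0 \<and> 0 < \<eta> \<and> \<eta> < 1 \<and>
    (\<forall>j n. 1 \<le> j \<and> j \<le> n \<longrightarrow>
       measure_pmf.expectation (simon p n) (\<lambda>xs. real (simon_N xs j) powr \<gamma>)
         \<le> c * (real n / real j) powr \<eta>)"
proof -
  define \<eta> where "\<eta> = (p * \<gamma> + 1) / 2"
  have "0 < p * \<gamma>" "p * \<gamma> < 1"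
    using assms by (simp_all add: field_simps)
  then have \<eta>: "0 < \<eta>" "\<eta> < 1" "p * \<gamma> < \<eta>"
    unfolding \<eta>_def by (simp_all add: field_simps)
  obtain a where a: "0 < a" "p * \<gamma> * (1 + 1 / a) powr (\<gamma> - 1) \<le> \<eta>"
    using exists_shift_powr_le[OF \<open>0 < p * \<gamma>\<close> \<eta>(3) assms(3)] by blast
  show ?thesis
  proof (intro exI conjI allI impI)
    fix j n :: nat assume jn: "1 \<le> j \<and> j \<le> n"
    have "measure_pmf.expectation (simon p n) (\<lambda>xs. real (simon_N xs j) powr \<gamma>)
        \<le> measure_pmf.expectation (simon p n) (\<lambda>xs. (real (count_list xs j) + a) powr \<gamma>)"
      by (rule expectation_mono_finite_pmf[OF finite_set_pmf_simon])
        (use a assms in \<open>auto simp: simon_N_def intro!: powr_mono2\<close>)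
    also have "\<dots> \<le> 2 * (1 + a) powr \<gamma> * (real n / real j) powr \<eta>"
      by (rule expectation_simon_shifted_powr_le) (use assms a \<eta> jn in auto)
    finally show "measure_pmf.expectation (simon p n) (\<lambda>xs. real (simon_N xs j) powr \<gamma>)
        \<le> 2 * (1 + a) powr \<gamma> * (real n / real j) powr \<eta>" .
  qed (use a \<eta> in auto)
qed

end
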